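(* Suppose Assumption 1 holds, and let $\lambda^0$ be a probability measure on $(\mathsf{X},\mathcal{B}(\mathsf{X}))$ with $\lambda^0\ll\mu_{\mathrm{pr}}$. Define the probability measure $\widehat\lambda^0$ on $(\mathsf{X}^2,\mathcal{B}(\mathsf{X}^2))$ by $\widehat\lambda^0(A)=\lambda^0(A_\Delta)$, where $A_\Delta=\{z\in\mathsf{X}:(z,z)\in A\}$. Then for every $\ell=1,\dots,\mathsf{L}$, $\widehat\lambda^0\ll\nu_\ell$, where $\nu_\ell$ is the unique invariant probability measure of the joint kernel $\bm p_\ell$.
   Context: Setting: $\mathsf{X}$ separable Banach space, prior $\mu_{\mathrm{pr}}$; posteriors $\mu^y_j$ with $\mu_{\mathrm{pr}}$-densities $\pi^y_j$; proposal density $Q_\ell$ w.r.t. $\mu_{\mathrm{pr}}$; $\alpha_j(\theta,z)=\min\{1,\frac{\pi^y_j(z)Q_\ell(\theta)}{\pi^y_j(\theta)Q_\ell(z)}\}$. Joint kernel for $\bm\theta_\ell=(\theta_{\ell,\ell-1},\theta_{\ell,\ell})$: $\bm p_\ell(\bm\theta_\ell,A)=\int\min\{\alpha_{\ell-1}(\theta_{\ell,\ell-1},z),\alpha_\ell(\theta_{\ell,\ell},z)\}\mathbf 1_{\{(z,z)\in A\}}Q_\ell(z)\mu_{\mathrm{pr}}(\mathrm{d}z)+\int(\alpha_{\ell-1}(\theta_{\ell,\ell-1},z)-\alpha_\ell(\theta_{\ell,\ell},z))^+\mathbf 1_{\{(z,\theta_{\ell,\ell})\in A\}}Q_\ell(z)\mu_{\mathrm{pr}}(\mathrm{d}z)+\int(\alpha_\ell(\theta_{\ell,\ell},z)-\alpha_{\ell-1}(\theta_{\ell,\ell-1},z))^+\mathbf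 1_{\{(\theta_{\ell,\ell-1},z)\in A\}}Q_\ell(z)\mu_{\mathrm{pr}}(\mathrm{d}z)+\mathbf 1_{\{\bm\theta_\ell\in A\}}(1-\int\max\{\alpha_{\ell-1}(\theta_{\ell,\ell-1},z),\alpha_\ell(\theta_{\ell,\ell},z)\}Q_\ell(z)\mu_{\mathrm{pr}}(\mathrm{d}z))$. Under Assumption 1 this kernel has a unique invariant probability measure $\nu_\ell$. Assumption 1: (1.1) $Q_\ell$ continuous and positive; (1.2) each $\pi^y_j$ continuous and positive; (1.3) for $j=\ell-1,\ell$, all $c_r>0$, $\{\theta: Q_\ell(\theta)/\pi^y_j(\theta)\le c_r\}$ compact; (1.4) $\exists c\in(0,1)$ independent of $\ell$ with $\operatorname{ess\,inf}_z Q_\ell(z)/\pi^y_j(z)\ge c$; (1.5) $\exists r>1,C_r$ independent of $\ell$ with $\int Q_\ell^r\mathrm{d}\mu_{\mathrm{pr}}\le C_r$. *)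

theory Defs
  imports "HOL-Probability.Probability"
begin

text \<open>Metropolis-Hastings (independence sampler) acceptance probability
  alpha_j(theta, z) for target density dens (w.r.t. the prior) and proposal density Q.\<close>
definition mh_alpha :: "('a \<Rightarrow> real) \<Rightarrow> ('a \<Rightarrow> real) \<Rightarrow> 'a \<Rightarrow> 'a \<Rightarrow> real" where
  "mh_alpha dens Q \<theta> z = min 1 ((dens z * Q \<theta>) / (dens \<theta> * Q z))"

text \<open>The joint (coupled) kernel p_l(theta_l, A) on X^2, with prior M,
  coarse density pi0 = pi_(l-1), fine density pi1 = pi_l and proposal density Q = Q_l.\<close>
definition joint_kernel ::
  "'a measure \<Rightarrow> ('a \<Rightarrow> real) \<Rightarrow> ('a \<Rightarrow> real) \<Rightarrow> ('a \<Rightarrow> real) \<Rightarrow> ('a \<times> 'a) \<Rightarrow> ('a \<times> 'a) set \<Rightarrow> real"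
where
  "joint_kernel M pi0 pi1 Q \<theta>\<theta> A =
     (\<integral>z. min (mh_alpha pi0 Q (fst \<theta>\<theta>) z) (mh_alpha pi1 Q (snd \<theta>\<theta>) z)
            * indicator A (z, z) * Q z \<partial>M)
   + (\<integral>z. max 0 (mh_alpha pi0 Q (fst \<theta>\<theta>) z - mh_alpha pi1 Q (snd \<theta>\<theta>) z)
            * indicator A (z, snd \<theta>\<theta>) * Q z \<partial>M)
   + (\<integral>z. max 0 (mh_alpha pi1 Q (snd \<theta>\<theta>) z - mh_alpha pi0 Q (fst \<theta>\<theta>) z)
            * indicator A (fst \<theta>\<theta>, z) * Q z \<partial>M)
   + indicator A \<theta>\<theta> * (1 - (\<integral>z. max (mh_alpha pi0 Q (fst \<theta>\<theta>) z) (mh_alpha pi1 Q (snd \<theta>\<theta>) z)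
            * Q z \<partial>M))"

definition joint_invariant ::
  "'a::topological_space measure \<Rightarrow> ('a \<Rightarrow> real) \<Rightarrow> ('a \<Rightarrow> real) \<Rightarrow> ('a \<Rightarrow> real) \<Rightarrow> ('a \<times> 'a) measure \<Rightarrow> bool"
where
  "joint_invariant M pi0 pi1 Q \<nu> \<longleftrightarrow>
     prob_space \<nu> \<and> sets \<nu> = sets borel \<and>
     (\<forall>A \<in> sets borel. measure \<nu> A = (\<integral>\<theta>\<theta>. joint_kernel M pi0 pi1 Q \<theta>\<theta> A \<partial>\<nu>))"

definition diag_lift :: "'a::topological_space measure \<Rightarrow> ('a \<times> 'a) measure" where
  "diag_lift lam = distr lam borel (\<lambda>z. (z, z))"

end

theory Submission
  imports Defs
begin

(* If nu is invariant and nu(N) = 0, then the kernel p(theta, N) vanishes for nu-almost every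
   theta, in particular for some theta. The kernel dominates its diagonal term
   integral of min(alpha_(l-1), alpha_l) * 1_N(z, z) * Q(z) d mu_pr(z), whose integrand is strictly
   positive on N_Delta = {z. (z, z) in N}; so mu_pr(N_Delta) = 0, and lambda^0 << mu_pr gives
   lambda-hat^0(N) = lambda^0(N_Delta) = 0. *)

lemma mh_alpha_pos:
  "0 < dens z \<Longrightarrow> 0 < dens \<theta> \<Longrightarrow> 0 < Q z \<Longrightarrow> 0 < Q \<theta> \<Longrightarrow> 0 < mh_alpha dens Q \<theta> z"
  unfolding mh_alpha_def by simp

lemma mh_alpha_le_1: "mh_alpha dens Q \<theta> z \<le> 1"
  unfolding mh_alpha_def by simp

lemma borel_measurable_diagonal: "(\<lambda>z. (z, z)) \<in> borel_measurable borel"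
  by (intro borel_measurable_continuous_onI continuous_intros)

locale coupled_mh_kernel = sigma_finite_measure M
  for M :: "'a::second_countable_topology measure" +
  fixes p0 p1 Q :: "'a \<Rightarrow> real"
  assumes sets_M: "sets M = sets borel"
    and borel_p0[measurable]: "p0 \<in> borel_measurable borel"
    and borel_p1[measurable]: "p1 \<in> borel_measurable borel"
    and borel_Q[measurable]: "Q \<in> borel_measurable borel"
    and p0_pos: "\<And>z. 0 < p0 z" and p1_pos: "\<And>z. 0 < p1 z" and Q_pos: "\<And>z. 0 < Q z"
    and integrable_Q: "integrable M Q" and integral_Q: "(\<integral>z. Q z \<partial>M) = 1"
begin

lemmas [measurable_cong] = sets_M

lemma borel_measurable_joint_kernel:
  assumes "A \<in> sets borel"
  shows "(\<lambda>t. joint_kernel M p0 p1 Q t A) \<in> borel_measurable borel"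
proof -
  have [measurable]: "A \<in> sets (borel \<Otimes>\<^sub>M borel)" using assms unfolding borel_prod .
  show ?thesis unfolding joint_kernel_def mh_alpha_def borel_prod[symmetric] by measurable
qed

lemma integrable_weighted_Q:
  assumes "g \<in> borel_measurable borel" "\<forall>z. 0 \<le> g z \<and> g z \<le> 1"
  shows "integrable M (\<lambda>z. g z * Q z)"
proof (rule Bochner_Integration.integrable_bound[OF integrable_Q])
  show "(\<lambda>z. g z * Q z) \<in> borel_measurable M" using assms(1) by measurable
  show "AE z in M. norm (g z * Q z) \<le> norm (Q z)"
    using assms(2) by (intro AE_I2) (simp add: abs_mult mult_left_le_one_le)
qed

lemma integral_weighted_Q_bounds:
  assumes "g \<in> borel_measurable borel" "\<forall>z. 0 \<le> g z \<and> g z \<le> 1"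
  shows "0 \<le> (\<integral>z. g z * Q z \<partial>M) \<and> (\<integral>z. g z * Q z \<partial>M) \<le> 1"
proof
  show "0 \<le> (\<integral>z. g z * Q z \<partial>M)"
    using assms(2) Q_pos by (intro Bochner_Integration.integral_nonneg) (simp add: less_imp_le)
  have "(\<integral>z. g z * Q z \<partial>M) \<le> (\<integral>z. Q z \<partial>M)"
    using assms Q_pos
    by (intro integral_mono integrable_weighted_Q integrable_Q) (auto intro: mult_left_le_one_le less_imp_le)
  then show "(\<integral>z. g z * Q z \<partial>M) \<le> 1" using integral_Q by simp
qed

lemma joint_kernel_bounds:
  fixes t :: "'a \<times> 'a"
  assumes "A \<in> sets borel"
  defines "D \<equiv> \<integral>z. min (mh_alpha p0 Q (fst t) z) (mh_alpha p1 Q (snd t) z) * indicator A (z, z) * Q z \<partial>M"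
  shows "0 \<le> D" "D \<le> joint_kernel M p0 p1 Q t A" "joint_kernel M p0 p1 Q t A \<le> 4"
proof -
  have [measurable]: "A \<in> sets (borel \<Otimes>\<^sub>M borel)" using assms(1) unfolding borel_prod .
  define a0 where "a0 z = mh_alpha p0 Q (fst t) z" for z
  define a1 where "a1 z = mh_alpha p1 Q (snd t) z" for z
  have [measurable]: "a0 \<in> borel_measurable borel" "a1 \<in> borel_measurable borel"
    unfolding a0_def[abs_def] a1_def[abs_def] mh_alpha_def by measurable
  have a0: "0 \<le> a0 z" "a0 z \<le> 1" and a1: "0 \<le> a1 z" "a1 z \<le> 1" for z
    unfolding a0_def a1_def using mh_alpha_pos mh_alpha_le_1 p0_pos p1_pos Q_pos less_imp_le by metis+
  have weights:
    "0 \<le> min (a0 z) (a1 z) * indicator A (z, z)" "min (a0 z) (a1 z) * indicator A (z, z) \<le> 1"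
    "0 \<le> max 0 (a0 z - a1 z) * indicator A (z, snd t)" "max 0 (a0 z - a1 z) * indicator A (z, snd t) \<le> 1"
    "0 \<le> max 0 (a1 z - a0 z) * indicator A (fst t, z)" "max 0 (a1 z - a0 z) * indicator A (fst t, z) \<le> 1"
    "0 \<le> max (a0 z) (a1 z)" "max (a0 z) (a1 z) \<le> 1" for z
    using a0[of z] a1[of z] by (auto simp: indicator_def)
  have "0 \<le> D \<and> D \<le> 1" unfolding D_def a0_def[symmetric] a1_def[symmetric]
    by (rule integral_weighted_Q_bounds) (measurable, use weights in auto)
  moreover have "0 \<le> (\<integral>z. max 0 (a0 z - a1 z) * indicator A (z, snd t) * Q z \<partial>M) \<and>
      (\<integral>z. max 0 (a0 z - a1 z) * indicator A (z, snd t) * Q z \<partial>M) \<le> 1"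
    by (rule integral_weighted_Q_bounds) (measurable, use weights in auto)
  moreover have "0 \<le> (\<integral>z. max 0 (a1 z - a0 z) * indicator A (fst t, z) * Q z \<partial>M) \<and>
      (\<integral>z. max 0 (a1 z - a0 z) * indicator A (fst t, z) * Q z \<partial>M) \<le> 1"
    by (rule integral_weighted_Q_bounds) (measurable, use weights in auto)
  moreover have "0 \<le> (\<integral>z. max (a0 z) (a1 z) * Q z \<partial>M) \<and> (\<integral>z. max (a0 z) (a1 z) * Q z \<partial>M) \<le> 1"
    by (rule integral_weighted_Q_bounds) (measurable, use weights in auto)
  moreover have "0 \<le> indicator A t * (1 - x) \<and> indicator A t * (1 - x) \<le> 1" if "0 \<le> x" "x \<le> 1" for x :: real
    using that by (simp add: indicator_def)
  ultimately show "0 \<le> D" "D \<le> joint_kernel M p0 p1 Q t A" "joint_kernel M p0 p1 Q t A \<le> 4"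
    unfolding joint_kernel_def D_def a0_def[symmetric] a1_def[symmetric] by (smt (verit))+
qed

lemma diagonal_null_if_joint_kernel_eq_0:
  assumes A: "A \<in> sets borel" and kernel_0: "joint_kernel M p0 p1 Q t A = 0"
  shows "(\<lambda>z. (z, z)) -` A \<in> null_sets M"
proof -
  have [measurable]: "A \<in> sets (borel \<Otimes>\<^sub>M borel)" using A unfolding borel_prod .
  define w where "w z = min (mh_alpha p0 Q (fst t) z) (mh_alpha p1 Q (snd t) z) * indicator A (z, z)" for z
  have w_meas: "w \<in> borel_measurable borel" unfolding w_def[abs_def] mh_alpha_def by measurable
  have w_pos: "0 < w z" if "(z, z) \<in> A" for z
    using that p0_pos p1_pos Q_pos by (simp add: w_def mh_alpha_pos)
  have w_unit: "0 \<le> w z \<and> w z \<le> 1" for z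
    using w_pos[of z] by (cases "(z, z) \<in> A") (auto simp: w_def mh_alpha_le_1 min_le_iff_disj)
  have "integrable M (\<lambda>z. w z * Q z)" using w_unit by (intro integrable_weighted_Q w_meas) simp
  moreover have "AE z in M. 0 \<le> w z * Q z" using w_unit Q_pos by (simp add: less_imp_le)
  moreover have "(\<integral>z. w z * Q z \<partial>M) = 0"
    using joint_kernel_bounds[OF A, of t] kernel_0 unfolding w_def by linarith
  ultimately have "AE z in M. w z * Q z = 0" by (simp add: integral_nonneg_eq_0_iff_AE)
  then have "AE z in M. (z, z) \<notin> A"
    by eventually_elim (metis w_pos Q_pos mult_pos_pos less_irrefl)
  moreover have "(\<lambda>z. (z, z)) -` A \<in> sets M"
    using measurable_sets_borel[OF borel_measurable_diagonal A] by (simp add: sets_M)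
  ultimately show ?thesis by (simp add: AE_iff_null_sets)
qed

lemma diagonal_null_if_invariant_null:
  assumes "joint_invariant M p0 p1 Q \<nu>" and N: "N \<in> null_sets \<nu>"
  shows "(\<lambda>z. (z, z)) -` N \<in> null_sets M"
proof -
  interpret \<nu>: prob_space \<nu> using assms(1) by (simp add: joint_invariant_def)
  have sets_\<nu>: "sets \<nu> = sets borel" using assms(1) by (simp add: joint_invariant_def)
  have N_borel: "N \<in> sets borel" using N sets_\<nu> by auto
  define k where "k t = joint_kernel M p0 p1 Q t N" for t
  have k_meas: "k \<in> borel_measurable \<nu>"
    unfolding k_def measurable_cong_sets[OF sets_\<nu> refl] by (rule borel_measurable_joint_kernel[OF N_borel])
  have k_bounds: "0 \<le> k t" "k t \<le> 4" for t
    using joint_kernel_bounds[OF N_borel, of t] unfolding k_def by linarith+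
  have "(\<integral>t. k t \<partial>\<nu>) = measure \<nu> N"
    using assms(1) N_borel unfolding joint_invariant_def k_def by simp
  also have "\<dots> = 0" using N by (auto simp: null_sets_def measure_def)
  finally have "AE t in \<nu>. k t = 0"
    using k_bounds by (subst integral_nonneg_eq_0_iff_AE[symmetric])
      (auto intro!: \<nu>.integrable_const_bound[where B = 4] k_meas)
  then obtain t where "k t = 0" using eventually_happens'[OF \<nu>.ae_filter_bot] by blast
  then show ?thesis using diagonal_null_if_joint_kernel_eq_0[OF N_borel] unfolding k_def by blast
qed

end

lemma diag_lift_null_sets:
  assumes "sets lam = sets borel" "N \<in> sets borel" "(\<lambda>z. (z, z)) -` N \<in> null_sets lam"
  shows "N \<in> null_sets (diag_lift lam)"
proof -
  have "(\<lambda>z. (z, z)) \<in> measurable lam borel"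
    unfolding measurable_cong_sets[OF assms(1) refl] by (rule borel_measurable_diagonal)
  moreover have "space lam = UNIV" using sets_eq_imp_space_eq[OF assms(1)] by simp
  ultimately show ?thesis using assms(2,3) by (simp add: diag_lift_def null_sets_distr_iff)
qed

theorem mainTheorem7:
  fixes M :: "'a::{banach, second_countable_topology} measure"
    and dens :: "nat \<Rightarrow> 'a \<Rightarrow> real"
    and Q :: "nat \<Rightarrow> 'a \<Rightarrow> real"
    and L :: nat
    and lam0 :: "'a measure"
    and c r Cr :: real
  assumes prior: "prob_space M" "sets M = sets borel"
    and post_dens: "\<And>j. integrable M (dens j) \<and> (\<integral>z. dens j z \<partial>M) = 1"
    and prop_dens: "\<And>l. integrable M (Q l) \<and> (\<integral>z. Q l z \<partial>M) = 1"
    \<comment> \<open>Assumption 1.1\<close>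
    and A11: "\<And>l. l \<in> {1..L} \<Longrightarrow> continuous_on UNIV (Q l) \<and> (\<forall>z. Q l z > 0)"
    \<comment> \<open>Assumption 1.2\<close>
    and A12: "\<And>j. continuous_on UNIV (dens j) \<and> (\<forall>z. dens j z > 0)"
    \<comment> \<open>Assumption 1.3\<close>
    and A13: "\<And>l j cr. l \<in> {1..L} \<Longrightarrow> j \<in> {l - 1, l} \<Longrightarrow> cr > 0 \<Longrightarrow>
                 compact {\<theta>. Q l \<theta> / dens j \<theta> \<le> cr}"
    \<comment> \<open>Assumption 1.4 (c independent of l)\<close>
    and A14: "0 < c" "c < 1"
      "\<And>l j. l \<in> {1..L} \<Longrightarrow> j \<in> {l - 1, l} \<Longrightarrow> (AE z in M. Q l z / dens j z \<ge> c)"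
    \<comment> \<open>Assumption 1.5 (r, Cr independent of l)\<close>
    and A15: "r > 1"
      "\<And>l. l \<in> {1..L} \<Longrightarrow> (\<integral>\<^sup>+ z. ennreal (Q l z powr r) \<partial>M) \<le> ennreal Cr"
    and lam: "prob_space lam0" "sets lam0 = sets borel" "absolutely_continuous M lam0"
  shows "\<forall>l \<in> {1..L}. \<forall>\<nu>. joint_invariant M (dens (l - 1)) (dens l) (Q l) \<nu> \<longrightarrow>
           absolutely_continuous \<nu> (diag_lift lam0)"
proof (intro ballI allI impI)
  (* Assumptions 1.3 to 1.5 and the normalisation of the posteriors only secure existence and
     uniqueness of the invariant measure;
     the claim holds for every invariant probability measure. *)
  fix l \<nu>
  assume l: "l \<in> {1..L}" and inv: "joint_invariant M (dens (l - 1)) (dens l) (Q l) \<nu>"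
  interpret M: prob_space M by (rule prior(1))
  interpret coupled_mh_kernel M "dens (l - 1)" "dens l" "Q l"
    using prior(2) A11[OF l] A12 prop_dens[of l] by unfold_locales (auto intro: borel_measurable_continuous_onI)
  show "absolutely_continuous \<nu> (diag_lift lam0)"
    unfolding absolutely_continuous_def
  proof
    fix N assume N: "N \<in> null_sets \<nu>"
    have "N \<in> sets borel" using N inv by (auto simp: joint_invariant_def)
    moreover have "(\<lambda>z. (z, z)) -` N \<in> null_sets lam0"
      using diagonal_null_if_invariant_null[OF inv N] lam(3) by (auto simp: absolutely_continuous_def)
    ultimately show "N \<in> null_sets (diag_lift lam0)" using diag_lift_null_sets[OF lam(2)] by blast
  qed
qed

end
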